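(* Let $n\ge1$ and let $S\in GL(4n,\mathbb{R})$ be written in $2n\times2n$ blocks as $S=\begin{pmatrix}A&B\\C&D\end{pmatrix}$. Suppose that for every real symmetric $\varGamma\in\mathbb{R}^{2n\times2n}$ the matrix $S\begin{pmatrix}\varGamma&0\\0&\varGamma\end{pmatrix}S^{T}$ is $2n\times2n$ block diagonal. Then: (i) $S$ is either (a) of the form $\begin{pmatrix}A&0\\0&D\end{pmatrix}$ or $\begin{pmatrix}0&B\\C&0\end{pmatrix}$, or (b) of the form $\begin{pmatrix}A&B\\C&D\end{pmatrix}$, where the blocks $A,B,C,D\in\mathbb{R}^{2n\times2n}$ appearing are invertible; (ii) $S\begin{pmatrix}X&0\\0&X\end{pmatrix}S^{T}$ is $2n\times2n$ block diagonal for all $X\in\mathbb{R}^{2n\times2n}$. *)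

theory Defs
  imports "HOL-Analysis.Analysis"
begin

text \<open>A (2m)x(2m) real matrix is indexed by the sum type 'm + 'm: Inl i are the
  first block of indices, Inr i the second block.\<close>

definition blk11 :: "real^('m::finite + 'm)^('m + 'm) \<Rightarrow> real^'m^'m" where
  "blk11 S = (\<chi> i j. S $ Inl i $ Inl j)"
definition blk12 :: "real^('m::finite + 'm)^('m + 'm) \<Rightarrow> real^'m^'m" where
  "blk12 S = (\<chi> i j. S $ Inl i $ Inr j)"
definition blk21 :: "real^('m::finite + 'm)^('m + 'm) \<Rightarrow> real^'m^'m" where
  "blk21 S = (\<chi> i j. S $ Inr i $ Inl j)"
definition blk22 :: "real^('m::finite + 'm)^('m + 'm) \<Rightarrow> real^'m^'m" where
  "blk22 S = (\<chi> i j. S $ Inr i $ Inr j)"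

definition dup_diag :: "real^'m^'m \<Rightarrow> real^('m::finite + 'm)^('m + 'm)" where
  "dup_diag G = (\<chi> i j. case (i, j) of
       (Inl a, Inl b) \<Rightarrow> G $ a $ b
     | (Inr a, Inr b) \<Rightarrow> G $ a $ b
     | _ \<Rightarrow> 0)"

definition block_diagonal :: "real^('m::finite + 'm)^('m + 'm) \<Rightarrow> bool" where
  "block_diagonal M \<longleftrightarrow> blk12 M = 0 \<and> blk21 M = 0"

end

theory Submission
  imports Defs
begin

text \<open>
  A matrix indexed by \<open>'m + 'm\<close> is block diagonal iff it commutes with the
  projection J onto the first block. Put \<open>\<phi> G = S diag(G,G) S\<^sup>-\<^sup>1\<close> and
  \<open>P = S S\<^sup>T\<close>; then \<open>S diag(G,G) S\<^sup>T = \<phi> G P\<close>, and P is invertible and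
  commutes with J (take G = 1). So the hypothesis says that the algebra homomorphism
  \<phi> maps every symmetric G into the commutant of J. The matrices G with \<open>\<phi> G\<close> in
  that commutant form a subalgebra, and the symmetric matrices generate the whole
  matrix algebra, because \<open>E\<^sub>k\<^sub>l = E\<^sub>k\<^sub>k (E\<^sub>k\<^sub>l + E\<^sub>l\<^sub>k)\<close> for k \<noteq> l;
  this is (ii).

  Taking \<open>X = E\<^sub>k\<^sub>l\<close> in (ii), the off-diagonal block gives
  \<open>A\<^sub>i\<^sub>k C\<^sub>j\<^sub>l + B\<^sub>i\<^sub>k D\<^sub>j\<^sub>l = 0\<close> for all indices. As both block rows
  (A B) and (C D) of S have full rank, neither pair vanishes, so either B = C = 0,
  or A = D = 0, or B = t A and C = -t D with t \<noteq> 0. In each case every block not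
  forced to be zero inherits a trivial left kernel from the corresponding block row
  of S, which gives (i).
\<close>

lemma sum_UNIV_Plus:
  "(\<Sum>p\<in>UNIV. f p) = (\<Sum>i\<in>UNIV. f (Inl i)) + (\<Sum>j\<in>UNIV. f (Inr j))"
  for f :: "'a::finite + 'b::finite \<Rightarrow> 'c::comm_monoid_add"
  by (subst UNIV_Plus_UNIV [symmetric], subst sum.Plus) (simp_all add: o_def)

lemma matrix_add_rdistrib: "(A + B) ** C = A ** C + B ** C"
  for A B :: "'a::semiring_1^'n^'m"
  by (vector matrix_matrix_mult_def sum.distrib [symmetric] field_simps)

lemma linear_matrix_mult_left: "linear (\<lambda>B. A ** B)"
  for A :: "real^'n^'m"
  by (simp add: linear_iff matrix_add_ldistrib matrix_scalar_ac flip: scalar_matrix_assoc)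

lemma linear_matrix_mult_right: "linear (\<lambda>A. A ** B)"
  for B :: "real^'p^'n"
  by (simp add: linear_iff matrix_add_rdistrib flip: scalar_matrix_assoc)

lemma invertible_iff_vector_matrix_ker:
  fixes M :: "'a::field^'n^'n"
  shows "invertible M \<longleftrightarrow> (\<forall>x. x v* M = 0 \<longrightarrow> x = 0)"
  by (simp add: invertible_right_inverse matrix_left_invertible_ker
      flip: left_invertible_transpose)

definition matrix_unit :: "'m \<Rightarrow> 'n \<Rightarrow> 'a::zero_neq_one^'n^'m" where
  "matrix_unit k l = axis k (axis l 1)"

lemma matrix_unit_nth: "matrix_unit k l $ i $ j = (if i = k \<and> j = l then 1 else 0)"
  by (simp add: matrix_unit_def axis_def)

lemma matrix_mult_matrix_unit_nth:
  "(A ** matrix_unit a b) $ p $ c = (if c = b then A $ p $ a else 0)"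
  for A :: "'a::semiring_1^'n^'m"
  by (simp add: matrix_matrix_mult_def matrix_unit_nth if_distrib if_distribR sum.delta
      cong: if_cong)

lemma matrix_unit_sandwich:
  "(A ** matrix_unit a b ** transpose B) $ p $ q = A $ p $ a * B $ q $ b"
  for A :: "'a::comm_semiring_1^'n^'m"
  unfolding matrix_matrix_mult_def [of "A ** matrix_unit a b"]
  by (simp add: matrix_mult_matrix_unit_nth transpose_def if_distrib if_distribR sum.delta
      cong: if_cong)

lemma matrix_unit_mult:
  "matrix_unit k l ** matrix_unit l' q = (if l = l' then matrix_unit k q else (0::'a::semiring_1^_^_))"
  by (auto simp: vec_eq_iff matrix_mult_matrix_unit_nth matrix_unit_nth)

lemma commute_mult_invertible_iff:
  fixes J F P :: "'a::field^'n^'n"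
  assumes "invertible P" and JP: "J ** P = P ** J"
  shows "J ** (F ** P) = F ** P ** J \<longleftrightarrow> J ** F = F ** J"
proof
  obtain P' where PP': "P ** P' = mat 1"
    using assms(1) unfolding invertible_def by blast
  assume "J ** (F ** P) = F ** P ** J"
  then have "J ** F ** P = F ** P ** J"
    by (simp add: matrix_mul_assoc)
  also have "\<dots> = F ** J ** P"
    by (simp add: JP flip: matrix_mul_assoc)
  finally have "J ** F ** (P ** P') = F ** J ** (P ** P')"
    by (simp add: matrix_mul_assoc)
  then show "J ** F = F ** J"
    by (simp add: PP')
next
  assume JF: "J ** F = F ** J"
  have "J ** (F ** P) = F ** J ** P"
    by (simp add: JF matrix_mul_assoc)
  also have "\<dots> = F ** P ** J"
    by (simp add: JP flip: matrix_mul_assoc)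
  finally show "J ** (F ** P) = F ** P ** J" .
qed

lemma transpose_add: "transpose (A + B) = transpose A + transpose B"
  by (simp add: vec_eq_iff transpose_def)

lemma transpose_matrix_unit: "transpose (matrix_unit k l) = matrix_unit l k"
  by (auto simp: vec_eq_iff transpose_def matrix_unit_nth)

lemma Basis_matrix_unit: "(Basis :: (real^'n^'m) set) = {matrix_unit k l | k l. True}"
  by (auto simp: Basis_vec_def matrix_unit_def Basis_real_def)

lemma subalgebra_containing_symmetric_matrices:
  fixes A :: "(real^'n^'n) set"
  assumes "subspace A"
    and mult: "\<And>G H. G \<in> A \<Longrightarrow> H \<in> A \<Longrightarrow> G ** H \<in> A"
    and sym: "\<And>G. transpose G = G \<Longrightarrow> G \<in> A"
  shows "X \<in> A"
proof -
  have "matrix_unit k l \<in> A" for k l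
  proof (cases "k = l")
    case True
    then show ?thesis
      by (intro sym) (simp add: transpose_matrix_unit)
  next
    case False
    have "matrix_unit k k ** (matrix_unit k l + matrix_unit l k) \<in> A"
      by (intro mult sym) (simp_all add: transpose_add transpose_matrix_unit add.commute)
    moreover have "matrix_unit k k ** (matrix_unit k l + matrix_unit l k) = matrix_unit k l"
      using False by (simp add: matrix_add_ldistrib matrix_unit_mult)
    ultimately show ?thesis
      by metis
  qed
  then have "Basis \<subseteq> A"
    by (auto simp: Basis_matrix_unit)
  then have "span Basis \<subseteq> A"
    by (rule span_minimal [OF _ assms(1)])
  then show ?thesis
    by auto
qed

lemma commute_multiplicative_linear_if_symmetric:
  fixes \<phi> :: "real^'m^'m \<Rightarrow> real^'n^'n"
  assumes "linear \<phi>"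
    and mult: "\<And>G H. \<phi> (G ** H) = \<phi> G ** \<phi> H"
    and sym: "\<And>G. transpose G = G \<Longrightarrow> J ** \<phi> G = \<phi> G ** J"
  shows "J ** \<phi> X = \<phi> X ** J"
proof -
  let ?A = "{G. J ** \<phi> G = \<phi> G ** J}"
  have "linear (\<lambda>G. J ** \<phi> G)" "linear (\<lambda>G. \<phi> G ** J)"
    using linear_compose [OF assms(1) linear_matrix_mult_left]
      linear_compose [OF assms(1) linear_matrix_mult_right]
    by (simp_all add: o_def)
  then have "subspace {G. J ** \<phi> G - \<phi> G ** J = 0}"
    by (intro linear_subspace_kernel linear_compose_sub)
  then have "subspace ?A"
    by simp
  moreover have "G ** H \<in> ?A" if G: "G \<in> ?A" and H: "H \<in> ?A" for G H
  proof -
    have "J ** (\<phi> G ** \<phi> H) = \<phi> G ** J ** \<phi> H"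
      using G by (simp add: matrix_mul_assoc)
    also have "\<dots> = \<phi> G ** \<phi> H ** J"
      using H by (simp flip: matrix_mul_assoc)
    finally show ?thesis
      by (simp add: mult)
  qed
  moreover have "G \<in> ?A" if "transpose G = G" for G
    using sym [OF that] by simp
  ultimately have "X \<in> ?A"
    by (rule subalgebra_containing_symmetric_matrices)
  then show ?thesis
    by simp
qed

lemma dup_diag_nth [simp]:
  "dup_diag G $ Inl a $ Inl b = G $ a $ b" "dup_diag G $ Inr a $ Inr b = G $ a $ b"
  "dup_diag G $ Inl a $ Inr b = 0" "dup_diag G $ Inr a $ Inl b = 0"
  by (simp_all add: dup_diag_def)

lemma dup_diag_mult: "dup_diag (G ** H) = dup_diag G ** dup_diag H"
  by (simp add: vec_eq_iff split_sum_all matrix_matrix_mult_def sum_UNIV_Plus)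

lemma linear_dup_diag: "linear dup_diag"
proof
  show "dup_diag (G + H) = dup_diag G + dup_diag H" for G H :: "real^'m^'m"
    by (simp add: vec_eq_iff split_sum_all)
  show "dup_diag (c *\<^sub>R G) = c *\<^sub>R dup_diag G" for c and G :: "real^'m^'m"
    by (simp add: vec_eq_iff split_sum_all)
qed

lemma dup_diag_mat_1: "dup_diag (mat 1) = mat 1"
  by (simp add: vec_eq_iff split_sum_all mat_def)

lemma dup_diag_matrix_unit:
  "dup_diag (matrix_unit k l) = matrix_unit (Inl k) (Inl l) + matrix_unit (Inr k) (Inr l)"
  by (simp add: vec_eq_iff split_sum_all matrix_unit_nth)

definition upper_projection :: "real^('m::finite + 'm)^('m + 'm)" where
  "upper_projection = (\<chi> i j. if i = j \<and> isl i then 1 else 0)"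

lemma upper_projection_mult_nth:
  "(upper_projection ** M) $ i $ j = (if isl i then M $ i $ j else 0)"
  "(M ** upper_projection) $ i $ j = (if isl j then M $ i $ j else 0)"
proof -
  have "(upper_projection ** M) $ i $ j =
      (\<Sum>k\<in>UNIV. if k = i then (if isl i then M $ i $ j else 0) else 0)"
    unfolding matrix_matrix_mult_def vec_lambda_beta
    by (intro sum.cong) (auto simp: upper_projection_def)
  then show "(upper_projection ** M) $ i $ j = (if isl i then M $ i $ j else 0)"
    by simp
  have "(M ** upper_projection) $ i $ j =
      (\<Sum>k\<in>UNIV. if k = j then (if isl j then M $ i $ j else 0) else 0)"
    unfolding matrix_matrix_mult_def vec_lambda_beta
    by (intro sum.cong) (auto simp: upper_projection_def)
  then show "(M ** upper_projection) $ i $ j = (if isl j then M $ i $ j else 0)"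
    by simp
qed

lemma block_diagonal_iff_commute:
  "block_diagonal M \<longleftrightarrow> upper_projection ** M = M ** upper_projection"
  unfolding block_diagonal_def blk12_def blk21_def vec_eq_iff upper_projection_mult_nth
  by (auto simp: split_sum_all)

lemma block_diagonal_congruence_if_symmetric:
  fixes S :: "real^('m::finite + 'm)^('m + 'm)"
  assumes "invertible S"
    and sym: "\<forall>G. transpose G = G \<longrightarrow> block_diagonal (S ** dup_diag G ** transpose S)"
  shows "block_diagonal (S ** dup_diag X ** transpose S)"
proof -
  obtain T where TS: "T ** S = mat 1"
    using assms(1) unfolding invertible_def by blast
  define \<phi> where "\<phi> = (\<lambda>G. S ** dup_diag G ** T)"
  define P where "P = S ** transpose S"
  have "invertible P"
    unfolding P_def using assms(1) by (intro invertible_mult transpose_invertible)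
  have JP: "upper_projection ** P = P ** upper_projection"
    using sym [rule_format, of "mat 1"]
    by (simp add: P_def dup_diag_mat_1 block_diagonal_iff_commute transpose_mat)
  have "\<phi> G ** P = S ** dup_diag G ** (T ** S) ** transpose S" for G
    by (simp add: \<phi>_def P_def matrix_mul_assoc)
  then have congruence: "S ** dup_diag G ** transpose S = \<phi> G ** P" for G
    by (simp add: TS)
  have block_diagonal_iff:
    "block_diagonal (S ** dup_diag G ** transpose S) \<longleftrightarrow>
       upper_projection ** \<phi> G = \<phi> G ** upper_projection" for G
    unfolding congruence block_diagonal_iff_commute
    using commute_mult_invertible_iff [OF \<open>invertible P\<close> JP] .
  have "linear \<phi>"
    using linear_compose [OF linear_compose [OF linear_dup_diag linear_matrix_mult_left]
        linear_matrix_mult_right]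
    by (simp add: \<phi>_def o_def)
  moreover have "\<phi> (G ** H) = \<phi> G ** \<phi> H" for G H
  proof -
    have "\<phi> G ** \<phi> H = S ** dup_diag G ** (T ** S) ** dup_diag H ** T"
      by (simp add: \<phi>_def matrix_mul_assoc)
    then show ?thesis
      by (simp add: TS \<phi>_def dup_diag_mult matrix_mul_assoc)
  qed
  ultimately have "upper_projection ** \<phi> X = \<phi> X ** upper_projection"
    by (rule commute_multiplicative_linear_if_symmetric) (use sym block_diagonal_iff in blast)
  then show ?thesis
    using block_diagonal_iff by blast
qed

lemma blk12_congruence_matrix_unit:
  "blk12 (S ** dup_diag (matrix_unit k l) ** transpose S) $ i $ j =
     blk11 S $ i $ k * blk21 S $ j $ l + blk12 S $ i $ k * blk22 S $ j $ l"
  by (simp add: blk11_def blk12_def blk21_def blk22_def dup_diag_matrix_unit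
      matrix_add_ldistrib matrix_add_rdistrib matrix_unit_sandwich)

lemma outer_sum_eq_0_cases:
  fixes A B :: "real^'n^'m" and C D :: "real^'q^'p"
  assumes rel: "\<And>i k j l. A $ i $ k * C $ j $ l + B $ i $ k * D $ j $ l = 0"
    and AB: "A \<noteq> 0 \<or> B \<noteq> 0" and CD: "C \<noteq> 0 \<or> D \<noteq> 0"
  shows "(B = 0 \<and> C = 0) \<or> (A = 0 \<and> D = 0) \<or> (\<exists>t. t \<noteq> 0 \<and> B = t *\<^sub>R A \<and> C = - t *\<^sub>R D)"
proof (cases "A = 0")
  case True
  then obtain i k where "B $ i $ k \<noteq> 0"
    using AB by (auto simp: vec_eq_iff)
  then have "D = 0"
    using rel [of i k] True by (simp add: vec_eq_iff)
  then show ?thesis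
    using True by blast
next
  case False
  then obtain i0 k0 where a: "A $ i0 $ k0 \<noteq> 0"
    by (auto simp: vec_eq_iff)
  define t where "t = B $ i0 $ k0 / A $ i0 $ k0"
  have C: "C = - t *\<^sub>R D"
    using rel [of i0 k0] a by (simp add: vec_eq_iff t_def field_simps eq_neg_iff_add_eq_0)
  then obtain j0 l0 where d: "D $ j0 $ l0 \<noteq> 0"
    using CD by (auto simp: vec_eq_iff)
  have B: "B = t *\<^sub>R A"
    using rel [of _ _ j0 l0] d by (auto simp: vec_eq_iff C algebra_simps)
  show ?thesis
    using B C by (cases "t = 0") auto
qed

lemma rows_of_invertible_independent:
  fixes S :: "'a::field^'n^'n" and r :: "'m::finite \<Rightarrow> 'n"
  assumes "invertible S" "inj r" "\<And>k. (\<Sum>i\<in>UNIV. y $ i * S $ r i $ k) = 0"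
  shows "y = 0"
proof -
  define z :: "'a^'n" where "z = (\<chi> p. if p \<in> range r then y $ inv r p else 0)"
  have "(z v* S) $ k = (\<Sum>p\<in>UNIV. if p \<in> range r then y $ inv r p * S $ p $ k else 0)" for k
    unfolding vector_matrix_mult_def vec_lambda_beta by (intro sum.cong) (auto simp: z_def)
  also have "\<dots> k = (\<Sum>p\<in>range r. y $ inv r p * S $ p $ k)" for k
    by (simp add: sum.inter_restrict [symmetric])
  also have "(\<Sum>p\<in>range r. y $ inv r p * S $ p $ k) = (\<Sum>i\<in>UNIV. y $ i * S $ r i $ k)" for k
    using assms(2) by (simp add: sum.reindex)
  finally have "z v* S = 0"
    using assms(3) by (simp add: vec_eq_iff)
  then have "z = 0"
    using assms(1) invertible_iff_vector_matrix_ker by blast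
  moreover have "y $ i = z $ r i" for i
    using assms(2) by (simp add: z_def)
  ultimately show "y = 0"
    by (simp add: vec_eq_iff)
qed

lemma upper_block_rows_independent:
  assumes "invertible S" "y v* blk11 S = 0" "y v* blk12 S = 0"
  shows "y = 0"
proof (rule rows_of_invertible_independent [OF assms(1) inj_Inl])
  show "(\<Sum>i\<in>UNIV. y $ i * S $ Inl i $ k) = 0" for k
    using assms(2,3)
    by (cases k) (simp_all add: vec_eq_iff vector_matrix_mult_def blk11_def blk12_def)
qed

lemma lower_block_rows_independent:
  assumes "invertible S" "y v* blk21 S = 0" "y v* blk22 S = 0"
  shows "y = 0"
proof (rule rows_of_invertible_independent [OF assms(1) inj_Inr])
  show "(\<Sum>i\<in>UNIV. y $ i * S $ Inr i $ k) = 0" for k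
    using assms(2,3)
    by (cases k) (simp_all add: vec_eq_iff vector_matrix_mult_def blk21_def blk22_def)
qed

lemma invertible_if_proportional_partner:
  fixes M N :: "real^'n^'n"
  assumes "\<And>y. y v* M = 0 \<Longrightarrow> y v* N = 0 \<Longrightarrow> y = 0" and "N = t *\<^sub>R M"
  shows "invertible M"
  using assms by (simp add: invertible_iff_vector_matrix_ker vector_scaleR_matrix_ac)

lemma invertible_blocks_trichotomy:
  fixes S :: "real^('m::finite + 'm)^('m + 'm)"
  assumes "invertible S"
    and rel: "\<And>i k j l. blk11 S $ i $ k * blk21 S $ j $ l + blk12 S $ i $ k * blk22 S $ j $ l = 0"
  shows "(blk12 S = 0 \<and> blk21 S = 0 \<and> invertible (blk11 S) \<and> invertible (blk22 S))
    \<or> (blk11 S = 0 \<and> blk22 S = 0 \<and> invertible (blk12 S) \<and> invertible (blk21 S))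
    \<or> (invertible (blk11 S) \<and> invertible (blk12 S) \<and> invertible (blk21 S) \<and> invertible (blk22 S))"
proof -
  note upper = upper_block_rows_independent [OF assms(1)]
  note lower = lower_block_rows_independent [OF assms(1)]
  have inv11: "invertible (blk11 S)" if "blk12 S = t *\<^sub>R blk11 S" for t
    using invertible_if_proportional_partner [OF upper that] .
  have inv12: "invertible (blk12 S)" if "blk11 S = t *\<^sub>R blk12 S" for t
    using invertible_if_proportional_partner [OF _ that] upper by blast
  have inv21: "invertible (blk21 S)" if "blk22 S = t *\<^sub>R blk21 S" for t
    using invertible_if_proportional_partner [OF lower that] .
  have inv22: "invertible (blk22 S)" if "blk21 S = t *\<^sub>R blk22 S" for t
    using invertible_if_proportional_partner [OF _ that] lower by blast
  have "blk11 S \<noteq> 0 \<or> blk12 S \<noteq> 0" "blk21 S \<noteq> 0 \<or> blk22 S \<noteq> 0"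
    using upper [of "axis undefined 1"] lower [of "axis undefined 1"] by (auto simp: axis_eq_0_iff)
  then consider "blk12 S = 0" "blk21 S = 0" | "blk11 S = 0" "blk22 S = 0"
    | t where "t \<noteq> 0" "blk12 S = t *\<^sub>R blk11 S" "blk21 S = - t *\<^sub>R blk22 S"
    using outer_sum_eq_0_cases [OF rel] by blast
  then show ?thesis
  proof cases
    case 1
    then show ?thesis
      using inv11 [of 0] inv22 [of 0] by simp
  next
    case 2
    then show ?thesis
      using inv12 [of 0] inv21 [of 0] by simp
  next
    case 3
    then show ?thesis
      using inv11 [of t] inv12 [of "1 / t"] inv21 [of "- 1 / t"] inv22 [of "- t"] by simp
  qed
qed

theorem lemma5:
  fixes S :: "real^('m::finite + 'm)^('m + 'm)" and n :: nat
  assumes "n \<ge> 1" and "CARD('m) = 2 * n"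
    and "invertible S"
    and "\<forall>G :: real^'m^'m. transpose G = G \<longrightarrow>
           block_diagonal (S ** dup_diag G ** transpose S)"
  shows "((blk12 S = 0 \<and> blk21 S = 0 \<and> invertible (blk11 S) \<and> invertible (blk22 S))
         \<or> (blk11 S = 0 \<and> blk22 S = 0 \<and> invertible (blk12 S) \<and> invertible (blk21 S))
         \<or> (invertible (blk11 S) \<and> invertible (blk12 S) \<and> invertible (blk21 S) \<and> invertible (blk22 S)))
       \<and> (\<forall>X :: real^'m^'m. block_diagonal (S ** dup_diag X ** transpose S))"
proof -
  have all: "\<forall>X :: real^'m^'m. block_diagonal (S ** dup_diag X ** transpose S)"
    using block_diagonal_congruence_if_symmetric [OF assms(3,4)] by blast
  have "blk11 S $ i $ k * blk21 S $ j $ l + blk12 S $ i $ k * blk22 S $ j $ l = 0" for i k j l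
    using all [rule_format, of "matrix_unit k l"]
    by (simp add: block_diagonal_def flip: blk12_congruence_matrix_unit)
  then show ?thesis
    using invertible_blocks_trichotomy [OF assms(3)] all by blast
qed

end
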